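(* Let $n,r\in\mathbb N$ with $n\ge 15$ and $3\le r\le n-9$. Then $$\mathrm{ex}(n-1+r;T_n^3)=\max\Big\{\Big\lfloor\frac{(n-5)(n-1+r)}2\Big\rfloor,\ \binom{n-1}2+\binom r2\Big\}.$$
   Context: All graphs are finite simple graphs. For a graph $L$, $\mathrm{ex}(p;L)$ denotes the maximum number of edges in a graph on $p$ vertices that contains no subgraph isomorphic to $L$. For $n\ge 6$, $T_n^3$ is the tree on vertex set $\{v_0,\ldots,v_{n-1}\}$ with edge set $\{v_0v_1,v_0v_2,\ldots,v_0v_{n-4},\ v_1v_{n-3},\ v_1v_{n-2},\ v_1v_{n-1}\}$. $\lfloor x\rfloor$ is the greatest integer not exceeding $x$. *)

theory Defs
  imports Main
begin

definition simple_graph :: "'a set \<Rightarrow> 'a set set \<Rightarrow> bool" where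
  "simple_graph V E \<longleftrightarrow> finite V \<and> (\<forall>e\<in>E. e \<subseteq> V \<and> card e = 2)"

definition contains_subgraph :: "'a set \<Rightarrow> 'a set set \<Rightarrow> 'b set \<Rightarrow> 'b set set \<Rightarrow> bool" where
  "contains_subgraph V E VL EL \<longleftrightarrow>
     (\<exists>f. inj_on f VL \<and> f ` VL \<subseteq> V \<and> (\<forall>e\<in>EL. f ` e \<in> E))"

text \<open>ex(p;L): maximum number of edges of a simple graph on p vertices (w.l.o.g. on {0..<p})
  with no subgraph isomorphic to L.\<close>
definition ex :: "nat \<Rightarrow> 'b set \<Rightarrow> 'b set set \<Rightarrow> nat" where
  "ex p VL EL = Max {card E | E. simple_graph {0..<p} E \<and> \<not> contains_subgraph {0..<p} E VL EL}"

text \<open>The tree T_n^3 on vertices v_0..v_{n-1}, with v_i represented by i.\<close>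
definition T3_vertices :: "nat \<Rightarrow> nat set" where
  "T3_vertices n = {0..<n}"

definition T3_edges :: "nat \<Rightarrow> nat set set" where
  "T3_edges n = {{0, i} | i. 1 \<le> i \<and> i \<le> n - 4} \<union> {{1, n - 3}, {1, n - 2}, {1, n - 1}}"

end

theory Submission
  imports Defs
begin

text \<open>
  Call an edge ab heavy if d(a) \<ge> n - 4 and d(b) \<ge> 4. If moreover |N(a) \<union> N(b)| \<ge> n, then a
  together with n - 5 further neighbours and b together with three leaves form a copy of T_n^3.
  In a graph without heavy edges, every vertex of degree at least n - 4 only sees
  vertices of degree at most 3; charging its degree to them bounds the degree sum by (n - 5)|V|.
  Otherwise choose such an a = u of maximum degree D \<in> {n - 4, n - 3, n - 2} and count
  the edges at N(u) and inside the rest Y of the graph: this gives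
  2e \<le> (n - 1)(n - 2) + r(r - 1) unless D = n - 4 and at most one vertex of Y is adjacent to a
  neighbour of u of degree at least n - 4, in which case 2e \<le> (n - 5)(n - 1 + r).
  Both bounds are attained: by K_{n-1} \<union> K_r, which is too small or too sparse to host T_n^3,
  and by a graph of maximum degree n - 5, which has no place for the centre v_0.
\<close>

(* Taking the elements of W - U first removes as few elements of U as possible. *)
lemma obtain_subset_sparing:
  assumes fin: "finite U" "finite W" and card: "k \<le> card U" "m \<le> card W" "k + m \<le> card (U \<union> W)"
  obtains L where "L \<subseteq> W" "card L = m" "k \<le> card (U - L)"
proof (cases "m \<le> card (W - U)")
  case True
  then obtain L where "L \<subseteq> W - U" "card L = m" by (meson obtain_subset_with_card_n)
  moreover then have "U - L = U" by auto
  ultimately show ?thesis using that[of L] card by auto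
next
  case False
  have "card (W \<inter> U) = card W - card (W - U)"
    using fin by (metis card_Diff_subset_Int card_Int_Diff finite_Diff add_diff_cancel_right')
  then obtain L' where L': "L' \<subseteq> W \<inter> U" "card L' = m - card (W - U)"
    using card False by (metis diff_le_mono obtain_subset_with_card_n)
  have fin': "finite L'" using L' fin finite_subset by blast
  have "card (W - U \<union> L') = m"
    using L' fin fin' False by (subst card_Un_disjoint) auto
  moreover have "card (U - (W - U \<union> L')) = card (U \<union> W) - m"
  proof -
    have "U - (W - U \<union> L') = U - L'" by auto
    moreover have "card (U \<union> W) = card U + card (W - U)"
      using fin by (metis Un_Diff_cancel card_Un_disjoint Diff_disjoint finite_Diff)
    ultimately show ?thesis using L' fin' False by (simp add: card_Diff_subset)
  qed
  ultimately show ?thesis using that[of "W - U \<union> L'"] L' card by auto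
qed

definition neighbours :: "'a set set \<Rightarrow> 'a \<Rightarrow> 'a set" where
  "neighbours E v = {w. {v, w} \<in> E}"

abbreviation degree :: "'a set set \<Rightarrow> 'a \<Rightarrow> nat" where
  "degree E v \<equiv> card (neighbours E v)"

lemma in_neighbours_iff [simp]: "w \<in> neighbours E v \<longleftrightarrow> {v, w} \<in> E"
  by (simp add: neighbours_def)

lemma neighbours_Un: "neighbours (A \<union> B) v = neighbours A v \<union> neighbours B v"
  by auto

locale finite_simple_graph =
  fixes V :: "'a set" and E :: "'a set set"
  assumes graph: "simple_graph V E"
begin

lemma edge_subset: "e \<in> E \<Longrightarrow> e \<subseteq> V"
  using graph unfolding simple_graph_def by blast

lemma neighbours_subset: "neighbours E v \<subseteq> V"
  using edge_subset by fastforce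

lemma finite_vertices: "finite V"
  using graph simple_graph_def by auto

lemma finite_neighbours: "finite (neighbours E v)"
  using neighbours_subset finite_vertices finite_subset by blast

lemma not_in_neighbours: "v \<notin> neighbours E v"
proof
  assume "v \<in> neighbours E v"
  then have "card {v, v} = 2" using graph unfolding simple_graph_def by simp
  then show False by simp
qed

lemma finite_edges: "finite E"
  using graph finite_vertices unfolding simple_graph_def
  by (meson Pow_iff finite_Pow_iff finite_subset subsetI)

lemma edge_doubleton:
  assumes "e \<in> E" obtains a b where "a \<noteq> b" "e = {a, b}"
proof -
  have "card e = 2" using assms graph unfolding simple_graph_def by blast
  then show ?thesis using that by (metis card_2_iff)
qed

lemma degree_eq_card_incident_edges: "degree E v = card {e \<in> E. v \<in> e}"
proof -
  have "bij_betw (\<lambda>w. {v, w}) (neighbours E v) {e \<in> E. v \<in> e}"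
  proof (rule bij_betwI')
    fix x y assume "x \<in> neighbours E v" "y \<in> neighbours E v"
    then have "x \<noteq> v" "y \<noteq> v" using not_in_neighbours by auto
    then show "({v, x} = {v, y}) = (x = y)" by (auto simp: doubleton_eq_iff)
  next
    fix e assume e: "e \<in> {e \<in> E. v \<in> e}"
    then obtain a b where "e = {a, b}" using edge_doubleton by blast
    then obtain x where "e = {v, x}" using e by (auto simp: insert_commute)
    with e show "\<exists>x\<in>neighbours E v. e = {v, x}" by auto
  qed simp
  then show ?thesis by (rule bij_betw_same_card)
qed

lemma sum_degree_eq_twice_card_edges: "(\<Sum>v\<in>V. degree E v) = 2 * card E"
proof -
  have "(\<Sum>v\<in>V. degree E v) = (\<Sum>v\<in>V. \<Sum>e\<in>E. if v \<in> e then 1 else 0)"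
    using finite_edges by (simp add: degree_eq_card_incident_edges sum.If_cases Collect_conj_eq)
  also have "\<dots> = (\<Sum>e\<in>E. \<Sum>v\<in>V. if v \<in> e then 1 else 0)" by (rule sum.swap)
  also have "\<dots> = (\<Sum>e\<in>E. card e)"
  proof (rule sum.cong)
    fix e assume "e \<in> E"
    then have "V \<inter> {v. v \<in> e} = e" using graph unfolding simple_graph_def by auto
    then show "(\<Sum>v\<in>V. if v \<in> e then 1 else (0::nat)) = card e"
      using finite_vertices by (simp add: sum.If_cases)
  qed simp
  also have "\<dots> = (\<Sum>e\<in>E. 2)" using graph simple_graph_def by (intro sum.cong) auto
  finally show ?thesis by simp
qed

lemma sum_card_neighbours_Int_swap:
  assumes "A \<subseteq> V" "B \<subseteq> V"
  shows "(\<Sum>a\<in>A. card (neighbours E a \<inter> B)) = (\<Sum>b\<in>B. card (neighbours E b \<inter> A))"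
proof -
  have fin: "finite A" "finite B" using assms finite_vertices finite_subset by auto
  have "(\<Sum>a\<in>A. card (neighbours E a \<inter> B)) = card (SIGMA a:A. neighbours E a \<inter> B)"
    using fin by simp
  also have "\<dots> = card (SIGMA b:B. neighbours E b \<inter> A)"
    by (rule bij_betw_same_card[of "\<lambda>(x, y). (y, x)"], rule bij_betwI') (auto simp: insert_commute)
  also have "\<dots> = (\<Sum>b\<in>B. card (neighbours E b \<inter> A))" using fin by simp
  finally show ?thesis .
qed

(* The embedding sends v_0, v_1 to u, w, then v_2, ..., v_(n-4) to ss and the leaves at v_1 to ls. *)
lemma contains_T3I:
  assumes n: "n \<ge> 6" and uw: "{u, w} \<in> E"
    and xs: "distinct (u # w # ss @ ls)" "length ss = n - 5" "length ls = 3"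
    and ss: "set ss \<subseteq> neighbours E u" and ls: "set ls \<subseteq> neighbours E w"
  shows "contains_subgraph V E (T3_vertices n) (T3_edges n)"
proof -
  define xs where "xs = u # w # ss @ ls"
  have len: "length xs = n" using xs n by (simp add: xs_def)
  have nth_ss: "xs ! i \<in> neighbours E u" if "2 \<le> i" "i \<le> n - 4" for i
  proof -
    have "i - 2 < length ss" using that xs(2) n by linarith
    moreover have "xs ! i = ss ! (i - 2)" using calculation that
      by (simp add: xs_def nth_append numeral_2_eq_2 nth_Cons')
    ultimately show ?thesis using ss by (metis nth_mem subsetD)
  qed
  have nth_ls: "xs ! j \<in> neighbours E w" if "n - 3 \<le> j" "j < n" for j
  proof -
    have j: "j = length (u # w # ss) + (j - (n - 3))" using that xs(2) n by simp
    have "xs ! j = ls ! (j - (n - 3))"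
      unfolding xs_def by (subst j) (metis append_Cons nth_append_length_plus)
    moreover have "j - (n - 3) < length ls" using that xs(3) by linarith
    ultimately show ?thesis using ls by (metis nth_mem subsetD)
  qed
  have "set xs \<subseteq> V"
    using uw edge_subset ss ls neighbours_subset by (fastforce simp: xs_def)
  then have "nth xs ` {0..<n} \<subseteq> V" using len by (auto dest: nth_mem)
  moreover have "\<forall>e\<in>T3_edges n. (nth xs) ` e \<in> E"
  proof
    fix e assume "e \<in> T3_edges n"
    then consider i where "e = {0, i}" "1 \<le> i" "i \<le> n - 4" | j where "e = {1, j}" "n - 3 \<le> j" "j < n"
      unfolding T3_edges_def using n by fastforce
    then show "(nth xs) ` e \<in> E"
    proof cases
      case (1 i)
      then show ?thesis using nth_ss[of i] uw by (cases "i = 1") (auto simp: xs_def)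
    next
      case (2 j)
      then show ?thesis using nth_ls[of j] by (auto simp: xs_def)
    qed
  qed
  ultimately show ?thesis
    unfolding contains_subgraph_def T3_vertices_def
    using xs(1) len by (intro exI[of _ "nth xs"]) (simp add: xs_def[symmetric] inj_on_nth)
qed

lemma contains_T3_of_edge:
  assumes n: "n \<ge> 6" and uw: "{u, w} \<in> E"
    and deg: "n - 4 \<le> degree E u" "4 \<le> degree E w"
    and union: "n \<le> card (neighbours E u \<union> neighbours E w)"
  shows "contains_subgraph V E (T3_vertices n) (T3_edges n)"
proof -
  define U where "U = neighbours E u - {w}"
  define W where "W = neighbours E w - {u}"
  have adj: "w \<in> neighbours E u" "u \<in> neighbours E w" using uw by (auto simp: insert_commute)
  have fin: "finite U" "finite W" using finite_neighbours by (auto simp: U_def W_def)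
  have "u \<noteq> w" using adj not_in_neighbours by metis
  have "U \<union> W = (neighbours E u \<union> neighbours E w) - {u, w}"
    using not_in_neighbours adj by (auto simp: U_def W_def)
  also have "card \<dots> = card (neighbours E u \<union> neighbours E w) - card {u, w}"
    using adj finite_neighbours by (intro card_Diff_subset) auto
  finally have "card (U \<union> W) = card (neighbours E u \<union> neighbours E w) - 2"
    using \<open>u \<noteq> w\<close> by simp
  moreover have "card U = degree E u - 1" "card W = degree E w - 1"
    using adj finite_neighbours by (simp_all add: U_def W_def)
  ultimately have "n - 5 \<le> card U" "3 \<le> card W" "n - 5 + 3 \<le> card (U \<union> W)"
    using deg union n by linarith+
  then obtain L where L: "L \<subseteq> W" "card L = 3" "n - 5 \<le> card (U - L)"
    by (rule obtain_subset_sparing[OF fin])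
  then obtain S where S: "S \<subseteq> U - L" "card S = n - 5" by (meson obtain_subset_with_card_n)
  have "finite S" "finite L" using S L fin finite_subset by (meson finite_Diff)+
  then obtain ss ls where ss: "set ss = S" "distinct ss" and ls: "set ls = L" "distinct ls"
    by (meson finite_distinct_list)
  show ?thesis
  proof (rule contains_T3I[OF n uw])
    show "distinct (u # w # ss @ ls)"
      using ss ls S L adj not_in_neighbours by (auto simp: U_def W_def)
    show "length ss = n - 5" "length ls = 3" using ss ls S L by (auto simp: distinct_card[symmetric])
    show "set ss \<subseteq> neighbours E u" "set ls \<subseteq> neighbours E w" using ss ls S L by (auto simp: U_def W_def)
  qed
qed

lemma obtain_T3_embedding:
  assumes "contains_subgraph V E (T3_vertices n) (T3_edges n)" and n: "n \<ge> 6"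
  obtains f where "inj_on f {0..<n}" "f ` {0..<n} \<subseteq> V"
    "\<And>i. 1 \<le> i \<Longrightarrow> i \<le> n - 4 \<Longrightarrow> f i \<in> neighbours E (f 0)"
    "\<And>j. n - 3 \<le> j \<Longrightarrow> j < n \<Longrightarrow> f j \<in> neighbours E (f 1)"
    "n - 4 \<le> degree E (f 0)"
proof -
  obtain f where f: "inj_on f {0..<n}" "f ` {0..<n} \<subseteq> V" "\<forall>e\<in>T3_edges n. f ` e \<in> E"
    using assms unfolding contains_subgraph_def T3_vertices_def by blast
  have centre: "f i \<in> neighbours E (f 0)" if "1 \<le> i" "i \<le> n - 4" for i
  proof -
    have "{0, i} \<in> T3_edges n" unfolding T3_edges_def using that by blast
    then show ?thesis using f(3) by auto
  qed
  have leaf: "f j \<in> neighbours E (f 1)" if "n - 3 \<le> j" "j < n" for j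
  proof -
    have "j = n - 3 \<or> j = n - 2 \<or> j = n - 1" using that by auto
    then have "{1, j} \<in> T3_edges n" unfolding T3_edges_def by blast
    then show ?thesis using f(3) by auto
  qed
  have "f ` {1..n - 4} \<subseteq> neighbours E (f 0)" using centre by auto
  then have "card (f ` {1..n - 4}) \<le> degree E (f 0)" using finite_neighbours by (rule card_mono[rotated])
  moreover have "inj_on f {1..n - 4}" by (rule inj_on_subset[OF f(1)]) auto
  ultimately have "n - 4 \<le> degree E (f 0)" by (simp add: card_image)
  then show ?thesis using that f(1,2) centre leaf by blast
qed

lemma not_contains_T3_if_degree_le:
  assumes n: "n \<ge> 6" and deg: "\<And>v. degree E v \<le> n - 5"
  shows "\<not> contains_subgraph V E (T3_vertices n) (T3_edges n)"
proof
  assume "contains_subgraph V E (T3_vertices n) (T3_edges n)"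
  then obtain f where "n - 4 \<le> degree E (f 0)" using n by (rule obtain_T3_embedding)
  then show False using deg[of "f 0"] n by linarith
qed

(* Charging: a vertex of degree at least n - 4 hands its degree to its neighbours, which all have
   degree at most 3, so every other vertex ends up with weight at most n - 5. *)
lemma twice_card_edges_le_if_no_heavy_edge:
  assumes n: "n \<ge> 11"
    and light: "\<And>u w. \<lbrakk>u \<in> V; n - 4 \<le> degree E u; w \<in> neighbours E u\<rbrakk> \<Longrightarrow> degree E w \<le> 3"
  shows "2 * card E \<le> (n - 5) * card V"
proof -
  define B where "B = {v \<in> V. n - 4 \<le> degree E v}"
  have fin: "finite B" "finite (V - B)" using finite_vertices by (auto simp: B_def)
  have nbr_B: "neighbours E v \<subseteq> V - B" if "v \<in> B" for v
    using that light neighbours_subset n by (fastforce simp: B_def)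
  have bound: "degree E v + card (neighbours E v \<inter> B) \<le> n - 5" if "v \<in> V - B" for v
  proof (cases "degree E v \<le> 3")
    case True
    then have "card (neighbours E v \<inter> B) \<le> 3"
      using finite_neighbours by (meson card_mono inf_le1 le_trans)
    then show ?thesis using True n by linarith
  next
    case False
    have "neighbours E v \<inter> B = {}"
    proof (intro equalityI subsetI)
      fix x assume "x \<in> neighbours E v \<inter> B"
      then have "x \<in> V" "v \<in> neighbours E x" "n - 4 \<le> degree E x" by (auto simp: B_def insert_commute)
      then show "x \<in> {}" using light False by blast
    qed simp
    moreover have "degree E v < n - 4" using that by (auto simp: B_def)
    ultimately show ?thesis by simp
  qed
  have "B \<subseteq> V" by (auto simp: B_def)
  then have "2 * card E = (\<Sum>v\<in>V - B. degree E v) + (\<Sum>v\<in>B. degree E v)"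
    using sum_degree_eq_twice_card_edges sum.subset_diff[OF _ finite_vertices] by metis
  also have "(\<Sum>v\<in>B. degree E v) = (\<Sum>v\<in>B. card (neighbours E v \<inter> (V - B)))"
    using nbr_B by (intro sum.cong) (auto simp: Int_absorb2)
  also have "\<dots> = (\<Sum>v\<in>V - B. card (neighbours E v \<inter> B))"
    by (rule sum_card_neighbours_Int_swap) (auto simp: B_def)
  also have "(\<Sum>v\<in>V - B. degree E v) + \<dots> = (\<Sum>v\<in>V - B. degree E v + card (neighbours E v \<inter> B))"
    by (simp add: sum.distrib)
  also have "\<dots> \<le> (\<Sum>v\<in>V - B. n - 5)" using bound by (rule sum_mono)
  also have "\<dots> = (n - 5) * card (V - B)" by simp
  also have "\<dots> \<le> (n - 5) * card V"
    using finite_vertices by (simp add: card_mono)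
  finally show ?thesis .
qed

end

(* Among the vertices a of heavy edges ab, u has maximum degree; U = N(u) and Y is the rest. *)
locale T3_free_heavy_vertex = finite_simple_graph V E
  for V :: "'a set" and E :: "'a set set" +
  fixes n r :: nat and u :: 'a
  assumes card_V: "card V = n - 1 + r" and n: "15 \<le> n" and r: "3 \<le> r" "r + 9 \<le> n"
    and T3_free: "\<not> contains_subgraph V E (T3_vertices n) (T3_edges n)"
    and u: "u \<in> V" "n - 4 \<le> degree E u" "\<exists>w\<in>neighbours E u. 4 \<le> degree E w"
    and u_max: "\<And>v w. \<lbrakk>v \<in> V; n - 4 \<le> degree E v; w \<in> neighbours E v; 4 \<le> degree E w\<rbrakk>
                  \<Longrightarrow> degree E v \<le> degree E u"
begin

abbreviation D :: nat where "D \<equiv> degree E u"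

abbreviation U :: "'a set" where "U \<equiv> neighbours E u"

definition Y :: "'a set" where "Y = V - insert u U"

definition deg_Y :: "'a \<Rightarrow> nat" where "deg_Y x = card (neighbours E x \<inter> Y)"

definition Y_near :: "'a set" where
  "Y_near = {y \<in> Y. \<exists>x\<in>U. n - 4 \<le> degree E x \<and> y \<in> neighbours E x}"

abbreviation t :: nat where "t \<equiv> card Y_near"

lemma finite_Y: "finite Y"
  using finite_vertices by (simp add: Y_def)

lemma D_plus_card_Y: "D + 1 + card Y = n - 1 + r"
proof -
  have sub: "insert u U \<subseteq> V" using u neighbours_subset by auto
  have "card (insert u U) = D + 1" using finite_neighbours not_in_neighbours by simp
  moreover have "card Y = card V - card (insert u U)"
    unfolding Y_def using sub finite_neighbours by (intro card_Diff_subset) auto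
  moreover have "card (insert u U) \<le> card V" using sub finite_vertices by (rule card_mono[rotated])
  ultimately show ?thesis using card_V by linarith
qed

lemma card_union_neighbours_le:
  assumes "{a, b} \<in> E" "n - 4 \<le> degree E a" "4 \<le> degree E b"
  shows "card (neighbours E a \<union> neighbours E b) \<le> n - 1"
proof (rule ccontr)
  assume "\<not> ?thesis"
  then have "contains_subgraph V E (T3_vertices n) (T3_edges n)"
    using contains_T3_of_edge[OF _ assms] n by simp
  then show False using T3_free by blast
qed

lemma deg_Y_le:
  assumes "x \<in> U" "4 \<le> degree E x"
  shows "D + 1 + deg_Y x \<le> n - 1"
proof -
  have "card (neighbours E u \<union> neighbours E x) \<le> n - 1"
    using card_union_neighbours_le assms u(2) by simp
  moreover have "insert u U \<union> (neighbours E x \<inter> Y) \<subseteq> neighbours E u \<union> neighbours E x"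
    using assms by (auto simp: insert_commute)
  moreover have "card (insert u U \<union> (neighbours E x \<inter> Y)) = D + 1 + deg_Y x"
    using finite_neighbours not_in_neighbours by (subst card_Un_disjoint) (auto simp: Y_def deg_Y_def)
  ultimately show ?thesis
    using finite_neighbours by (metis card_mono finite_UnI le_trans)
qed

lemma D_le: "D \<le> n - 2"
  using u(3) deg_Y_le by fastforce

lemma heavy_neighbour_degree_le:
  assumes "x \<in> U" "n - 4 \<le> degree E x"
  shows "degree E x \<le> D"
proof -
  have "x \<in> V" using assms(1) neighbours_subset by blast
  moreover have "u \<in> neighbours E x" using assms(1) by (simp add: insert_commute)
  ultimately show ?thesis using u_max[of x u] assms(2) u(2) n by simp
qed

lemma deg_Y_le_t:
  assumes "x \<in> U" "n - 4 \<le> degree E x"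
  shows "deg_Y x \<le> t"
proof -
  have "neighbours E x \<inter> Y \<subseteq> Y_near" using assms by (auto simp: Y_near_def)
  then show ?thesis using finite_Y by (simp add: deg_Y_def Y_near_def card_mono)
qed

lemma card_neighbours_Int_Y_le: "y \<in> Y \<Longrightarrow> card (neighbours E y \<inter> Y) \<le> card Y - 1"
proof -
  assume y: "y \<in> Y"
  have "neighbours E y \<inter> Y \<subseteq> Y - {y}" using not_in_neighbours by blast
  then have "card (neighbours E y \<inter> Y) \<le> card (Y - {y})" using finite_Y by (intro card_mono) auto
  then show ?thesis using y finite_Y by simp
qed

lemma Y_near_inner_degree_le:
  assumes "y \<in> Y_near"
  shows "card (neighbours E y \<inter> Y) \<le> 3"
proof -
  obtain x where x: "x \<in> U" "n - 4 \<le> degree E x" "y \<in> neighbours E x" and y: "y \<in> Y"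
    using assms by (auto simp: Y_near_def)
  have xy: "x \<in> neighbours E y" using x(3) by (simp add: insert_commute)
  have "x \<notin> Y" using x(1) by (simp add: Y_def)
  show ?thesis
  proof (cases "degree E y \<le> 3")
    case True
    have "neighbours E y \<inter> Y \<subseteq> neighbours E y - {x}" using \<open>x \<notin> Y\<close> by auto
    then have "card (neighbours E y \<inter> Y) \<le> card (neighbours E y - {x})"
      using finite_neighbours by (intro card_mono) auto
    also have "\<dots> = degree E y - 1" using xy finite_neighbours by simp
    finally show ?thesis using True by linarith
  next
    case False
    define Z where "Z = neighbours E y \<inter> Y - neighbours E x"
    have "insert x (neighbours E x) \<union> Z \<subseteq> neighbours E x \<union> neighbours E y"
      using xy by (auto simp: Z_def)
    moreover have "card (neighbours E x \<union> neighbours E y) \<le> n - 1"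
      using card_union_neighbours_le x(2,3) False by simp
    moreover have "card (insert x (neighbours E x) \<union> Z) = degree E x + 1 + card Z"
      using finite_neighbours not_in_neighbours \<open>x \<notin> Y\<close> by (subst card_Un_disjoint) (auto simp: Z_def)
    ultimately have Z: "degree E x + 1 + card Z \<le> n - 1"
      using finite_neighbours by (metis card_mono finite_UnI le_trans)
    have "card (neighbours E y \<inter> Y) \<le> card (Z \<union> (neighbours E x \<inter> Y - {y}))"
      using not_in_neighbours finite_neighbours by (intro card_mono) (auto simp: Z_def)
    also have "\<dots> \<le> card Z + card (neighbours E x \<inter> Y - {y})" by (rule card_Un_le)
    also have "card (neighbours E x \<inter> Y - {y}) = deg_Y x - 1"
      using x(3) y finite_neighbours by (simp add: deg_Y_def)
    finally have "card (neighbours E y \<inter> Y) \<le> card Z + (deg_Y x - 1)" .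
    moreover have "D + 1 + deg_Y x \<le> n - 1" using deg_Y_le x(1,2) n by simp
    ultimately show ?thesis using Z x(2) u(2) by linarith
  qed
qed

lemma twice_card_edges_eq:
  "2 * card E = D + (\<Sum>x\<in>U. degree E x + deg_Y x) + (\<Sum>y\<in>Y. card (neighbours E y \<inter> Y))"
proof -
  have V: "V = insert u (U \<union> Y)" using u(1) neighbours_subset[of u] unfolding Y_def by blast
  have fin: "finite U" "finite Y" using finite_neighbours finite_Y by auto
  have disj: "u \<notin> U \<union> Y" "U \<inter> Y = {}" using not_in_neighbours[of u] unfolding Y_def by blast+
  have split_Y: "degree E y = card (neighbours E y \<inter> insert u U) + card (neighbours E y \<inter> Y)"
    if "y \<in> Y" for y
  proof -
    have "neighbours E y = (neighbours E y \<inter> insert u U) \<union> (neighbours E y \<inter> Y)"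
      using neighbours_subset[of y] unfolding Y_def by blast
    moreover have "card ((neighbours E y \<inter> insert u U) \<union> (neighbours E y \<inter> Y))
        = card (neighbours E y \<inter> insert u U) + card (neighbours E y \<inter> Y)"
      using finite_neighbours by (intro card_Un_disjoint) (auto simp: Y_def)
    ultimately show ?thesis by metis
  qed
  have "(\<Sum>y\<in>Y. card (neighbours E y \<inter> insert u U)) = (\<Sum>x\<in>insert u U. card (neighbours E x \<inter> Y))"
    by (rule sum_card_neighbours_Int_swap) (use V in blast)+
  also have "\<dots> = card (neighbours E u \<inter> Y) + (\<Sum>x\<in>U. deg_Y x)"
    using fin disj by (simp add: deg_Y_def)
  also have "neighbours E u \<inter> Y = {}" unfolding Y_def by blast
  finally have cross: "(\<Sum>y\<in>Y. card (neighbours E y \<inter> insert u U)) = (\<Sum>x\<in>U. deg_Y x)"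
    by simp
  have "2 * card E = (\<Sum>v\<in>insert u (U \<union> Y). degree E v)"
    by (simp only: V[symmetric] sum_degree_eq_twice_card_edges)
  also have "\<dots> = D + ((\<Sum>x\<in>U. degree E x) + (\<Sum>y\<in>Y. degree E y))"
    using fin disj by (simp add: sum.union_disjoint)
  also have "(\<Sum>y\<in>Y. degree E y)
      = (\<Sum>x\<in>U. deg_Y x) + (\<Sum>y\<in>Y. card (neighbours E y \<inter> Y))"
    using split_Y cross by (simp add: sum.distrib)
  finally show ?thesis by (simp add: sum.distrib)
qed

(* The excess over D is 0, min t 1 and max 1 (min t 2) for D = n - 2, n - 3 and n - 4. *)
lemma neighbour_weight_le:
  assumes x: "x \<in> U"
  shows "degree E x + deg_Y x \<le> D + max (min t (n - 2 - D)) (n - 3 - D)"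
proof -
  consider "n - 4 \<le> degree E x" | "4 \<le> degree E x" "degree E x < n - 4" | "degree E x \<le> 3"
    by linarith
  then show ?thesis
  proof cases
    case 1
    moreover have "4 \<le> degree E x" using 1 n by linarith
    ultimately have "degree E x \<le> D" "deg_Y x \<le> t" "D + 1 + deg_Y x \<le> n - 1"
      using heavy_neighbour_degree_le deg_Y_le deg_Y_le_t x by auto
    then have "degree E x \<le> D" "deg_Y x \<le> min t (n - 2 - D)" by auto
    moreover have "min t (n - 2 - D) \<le> max (min t (n - 2 - D)) (n - 3 - D)" by simp
    ultimately show ?thesis by linarith
  next
    case 2
    then have "D + 1 + deg_Y x \<le> n - 1" using deg_Y_le x by simp
    moreover have "n - 3 - D \<le> max (min t (n - 2 - D)) (n - 3 - D)" by simp
    ultimately show ?thesis using 2 u(2) by linarith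
  next
    case 3
    moreover have "deg_Y x \<le> degree E x"
      using finite_neighbours by (simp add: deg_Y_def card_mono)
    ultimately show ?thesis using u(2) n by linarith
  qed
qed

lemma Y_degree_sum_le: "(\<Sum>y\<in>Y. card (neighbours E y \<inter> Y)) \<le> card Y * (card Y - 1)"
  using sum_mono[of Y _ "\<lambda>_. card Y - 1"] card_neighbours_Int_Y_le by simp

lemma Y_degree_sum_le_Y_near:
  "(\<Sum>y\<in>Y. card (neighbours E y \<inter> Y)) + t * (card Y - 1) \<le> 3 * t + card Y * (card Y - 1)"
proof -
  have sub: "Y_near \<subseteq> Y" by (auto simp: Y_near_def)
  have "(\<Sum>y\<in>Y. card (neighbours E y \<inter> Y))
      = (\<Sum>y\<in>Y_near. card (neighbours E y \<inter> Y)) + (\<Sum>y\<in>Y - Y_near. card (neighbours E y \<inter> Y))"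
    using sum.subset_diff[OF sub finite_Y] by (simp add: add.commute)
  also have "\<dots> \<le> (\<Sum>y\<in>Y_near. 3) + (\<Sum>y\<in>Y - Y_near. card Y - 1)"
    using Y_near_inner_degree_le card_neighbours_Int_Y_le by (intro add_mono sum_mono) auto
  also have "\<dots> = 3 * t + (card Y - t) * (card Y - 1)"
    using sub finite_Y by (simp add: card_Diff_subset finite_subset)
  finally have "(\<Sum>y\<in>Y. card (neighbours E y \<inter> Y)) \<le> 3 * t + (card Y - t) * (card Y - 1)" .
  moreover have "(card Y - t) * (card Y - 1) + t * (card Y - 1) = card Y * (card Y - 1)"
    using card_mono[OF finite_Y sub] by (metis add_mult_distrib le_add_diff_inverse2)
  ultimately show ?thesis by linarith
qed

lemma twice_card_edges_le:
  "2 * card E \<le> D + D * (D + max (min t (n - 2 - D)) (n - 3 - D)) + (\<Sum>y\<in>Y. card (neighbours E y \<inter> Y))"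
proof -
  have "(\<Sum>x\<in>U. degree E x + deg_Y x) \<le> (\<Sum>x\<in>U. D + max (min t (n - 2 - D)) (n - 3 - D))"
    using neighbour_weight_le by (rule sum_mono)
  then show ?thesis using twice_card_edges_eq by simp
qed

lemma twice_card_edges_le_two_cliques:
  assumes "D \<noteq> n - 4 \<or> 2 \<le> t"
  shows "2 * card E \<le> (n - 1) * (n - 2) + r * (r - 1)"
proof -
  define S where "S = (\<Sum>y\<in>Y. card (neighbours E y \<inter> Y))"
  define c where "c = max (min t (n - 2 - D)) (n - 3 - D)"
  \<comment> \<open>With these substitutions all bounds become polynomial inequalities without subtraction.\<close>
  obtain q where q: "r = q + 3" using le_Suc_ex[OF r(1)] by auto
  obtain m where m: "n = q + m + 12" using le_Suc_ex[OF r(2)] q by auto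
  have E: "2 * card E \<le> D + D * (D + c) + S"
    unfolding S_def c_def by (rule twice_card_edges_le)
  have S1: "S \<le> card Y * (card Y - 1)" using Y_degree_sum_le by (simp add: S_def)
  have S2: "S + t * (card Y - 1) \<le> 3 * t + card Y * (card Y - 1)"
    using Y_degree_sum_le_Y_near by (simp add: S_def)
  have target: "(n - 1) * (n - 2) + r * (r - 1) = (q + m + 11) * (q + m + 10) + (q + 3) * (q + 2)"
    by (simp add: m q algebra_simps)
  have "D = n - 2 \<or> D = n - 3 \<or> D = n - 4" using D_le u(2) by linarith
  then consider "D = n - 2" | "D = n - 3" "t = 0" | "D = n - 3" "t \<ge> 1" | "D = n - 4" "2 \<le> t"
    using assms by force
  then show ?thesis
  proof cases
    case 1
    then have "D = q + m + 10" "c = 0" "card Y = q + 3" using D_plus_card_Y by (auto simp: c_def m q)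
    then show ?thesis using E S1 unfolding target by (simp add: algebra_simps)
  next
    case 2
    then have "D = q + m + 9" "c = 0" "card Y = q + 4" using D_plus_card_Y by (auto simp: c_def m q)
    then show ?thesis using E S1 unfolding target by (simp add: algebra_simps)
  next
    case 3
    then have "D = q + m + 9" "c = 1" "card Y = q + 4" using D_plus_card_Y by (auto simp: c_def m q)
    moreover obtain k where "t = k + 1" using 3 by (auto dest: le_Suc_ex)
    ultimately show ?thesis using E S2 unfolding target by (simp add: algebra_simps)
  next
    case 4
    then have "D = q + m + 8" "c = 2" "card Y = q + 5" using D_plus_card_Y by (auto simp: c_def m q)
    moreover obtain k where "t = k + 2" using 4 by (auto dest: le_Suc_ex)
    ultimately show ?thesis using E S2 unfolding target by (simp add: algebra_simps)
  qed
qed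

lemma twice_card_edges_le_regular:
  assumes "D = n - 4" "t \<le> 1"
  shows "2 * card E \<le> (n - 5) * (n - 1 + r)"
proof -
  define S where "S = (\<Sum>y\<in>Y. card (neighbours E y \<inter> Y))"
  obtain q where q: "r = q + 3" using le_Suc_ex[OF r(1)] by auto
  obtain m where m: "n = q + m + 12" using le_Suc_ex[OF r(2)] q by auto
  have "max (min t (n - 2 - D)) (n - 3 - D) = 1" using assms n by auto
  then have E: "2 * card E \<le> D + D * (D + 1) + S"
    using twice_card_edges_le by (simp add: S_def)
  have D: "D = q + m + 8" using assms(1) by (simp add: m)
  have "card Y = q + 5" using D_plus_card_Y assms(1) by (simp add: m q)
  then have "S \<le> (q + 5) * (q + 4)" using Y_degree_sum_le by (simp add: S_def add.commute)
  moreover have "3 \<le> q + m" using n by (simp add: m)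
  ultimately show ?thesis using E unfolding D by (simp add: m q algebra_simps)
qed

lemma twice_card_edges_le_max:
  "2 * card E \<le> (n - 5) * (n - 1 + r) \<or> 2 * card E \<le> (n - 1) * (n - 2) + r * (r - 1)"
  using twice_card_edges_le_regular twice_card_edges_le_two_cliques by linarith

end

definition two_cliques :: "nat \<Rightarrow> nat \<Rightarrow> nat set set" where
  "two_cliques m p = {e. e \<subseteq> {0..<m} \<and> card e = 2} \<union> {e. e \<subseteq> {m..<p} \<and> card e = 2}"

lemma simple_graph_two_cliques: "m \<le> p \<Longrightarrow> simple_graph {0..<p} (two_cliques m p)"
  unfolding simple_graph_def two_cliques_def by auto

lemma card_two_cliques:
  assumes "m \<le> p" shows "card (two_cliques m p) = (m choose 2) + ((p - m) choose 2)"
proof -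
  have fin: "finite {e. e \<subseteq> A \<and> card e = 2}" if "finite A" for A :: "nat set"
    by (rule finite_subset[of _ "Pow A"]) (use that in auto)
  have "{e. e \<subseteq> {0..<m} \<and> card e = 2} \<inter> {e. e \<subseteq> {m..<p} \<and> card e = 2} = {}"
  proof (rule equals0I)
    fix e assume "e \<in> {e. e \<subseteq> {0..<m} \<and> card e = 2} \<inter> {e. e \<subseteq> {m..<p} \<and> card e = 2}"
    then have "e \<subseteq> {0..<m} \<inter> {m..<p}" "card e = 2" by (blast, simp)
    moreover have "{0..<m} \<inter> {m..<p} = {}" by auto
    ultimately show False by simp
  qed
  then show ?thesis
    unfolding two_cliques_def using assms fin
    by (simp add: card_Un_disjoint n_subsets)
qed

lemma neighbours_two_cliques_low:
  "v < m \<Longrightarrow> neighbours (two_cliques m p) v \<subseteq> {0..<m}"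
  unfolding two_cliques_def by auto

lemma neighbours_two_cliques_high:
  "m \<le> v \<Longrightarrow> neighbours (two_cliques m p) v \<subseteq> {m..<p} - {v}"
  unfolding two_cliques_def by (auto simp: card_insert_if)

lemma two_cliques_not_contains_T3:
  assumes n: "n \<ge> 6" and m: "m < n" "m \<le> p" "p - m + 4 \<le> n"
  shows "\<not> contains_subgraph {0..<p} (two_cliques m p) (T3_vertices n) (T3_edges n)"
proof
  assume contains: "contains_subgraph {0..<p} (two_cliques m p) (T3_vertices n) (T3_edges n)"
  interpret finite_simple_graph "{0..<p}" "two_cliques m p"
    by unfold_locales (rule simple_graph_two_cliques[OF m(2)])
  obtain f where f: "inj_on f {0..<n}" "f ` {0..<n} \<subseteq> {0..<p}"
    "\<And>i. 1 \<le> i \<Longrightarrow> i \<le> n - 4 \<Longrightarrow> f i \<in> neighbours (two_cliques m p) (f 0)"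
    "\<And>j. n - 3 \<le> j \<Longrightarrow> j < n \<Longrightarrow> f j \<in> neighbours (two_cliques m p) (f 1)"
    "n - 4 \<le> degree (two_cliques m p) (f 0)"
    using obtain_T3_embedding[OF contains n] by blast
  have f0: "f 0 < m"
  proof (rule ccontr)
    assume "\<not> f 0 < m"
    then have "degree (two_cliques m p) (f 0) \<le> card ({m..<p} - {f 0})"
      using neighbours_two_cliques_high by (intro card_mono) auto
    also have "\<dots> = p - m - 1"
    proof -
      have "f 0 \<in> f ` {0..<n}" using n by simp
      then have "f 0 \<in> {m..<p}" using \<open>\<not> f 0 < m\<close> f(2) by auto
      then show ?thesis by simp
    qed
    also have "\<dots> < n - 4" using m n by linarith
    finally show False using f(5) by linarith
  qed
  then have f1: "f 1 < m" using f(3)[of 1] n neighbours_two_cliques_low by fastforce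
  have "f ` {0..<n} \<subseteq> {0..<m}"
  proof
    fix x assume "x \<in> f ` {0..<n}"
    then obtain i where "i < n" "x = f i" by auto
    then consider "i = 0" | "1 \<le> i" "i \<le> n - 4" | "n - 3 \<le> i" "i < n" by linarith
    then show "x \<in> {0..<m}"
      using f0 f1 f(3,4) neighbours_two_cliques_low \<open>x = f i\<close> by cases (simp, blast+)
  qed
  then have "card (f ` {0..<n}) \<le> m" by (metis card_atLeastLessThan card_mono finite_atLeastLessThan diff_zero)
  then show False using f(1) m by (simp add: card_image)
qed

definition circulant :: "nat \<Rightarrow> nat \<Rightarrow> nat set set" where
  "circulant p s = (\<lambda>(a, k). {a, (a + k) mod p}) ` ({0..<p} \<times> {1..s})"

definition antipodal_matching :: "nat \<Rightarrow> nat set set" where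
  "antipodal_matching p = (\<lambda>i. {i, i + p div 2}) ` {0..<p div 2}"

lemma add_mod_eq_if: "a < p \<Longrightarrow> k \<le> p \<Longrightarrow> (a + k) mod (p::nat) = (if a + k < p then a + k else a + k - p)"
  by (simp add: mod_if)

lemma simple_graph_circulant:
  assumes "s < p" shows "simple_graph {0..<p} (circulant p s)"
  unfolding simple_graph_def circulant_def
proof (intro conjI ballI)
  fix e assume "e \<in> (\<lambda>(a, k). {a, (a + k) mod p}) ` ({0..<p} \<times> {1..s})"
  then obtain a k where e: "e = {a, (a + k) mod p}" "a < p" "1 \<le> k" "k \<le> s" by auto
  then have "(a + k) mod p \<noteq> a" using assms by (auto simp: add_mod_eq_if)
  then show "e \<subseteq> {0..<p}" "card e = 2" using e assms by auto
qed simp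

lemma card_circulant:
  assumes "2 * s < p" shows "card (circulant p s) = p * s"
proof -
  have "inj_on (\<lambda>(a, k). {a, (a + k) mod p}) ({0..<p} \<times> {1..s})"
  proof (rule inj_onI)
    fix x y assume x: "x \<in> {0..<p} \<times> {1..s}" and y: "y \<in> {0..<p} \<times> {1..s}"
      and eq: "(\<lambda>(a, k). {a, (a + k) mod p}) x = (\<lambda>(a, k). {a, (a + k) mod p}) y"
    obtain a k b l where xy: "x = (a, k)" "y = (b, l)" by fastforce
    have "a \<noteq> (b + l) mod p \<or> b \<noteq> (a + k) mod p"
      using x y assms by (auto simp: xy add_mod_eq_if)
    then show "x = y"
      using x y eq assms by (auto simp: xy doubleton_eq_iff add_mod_eq_if split: if_splits)
  qed
  then show ?thesis unfolding circulant_def by (simp add: card_image card_cartesian_product)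
qed

lemma degree_circulant_le:
  assumes "s < p" shows "degree (circulant p s) (v::nat) \<le> 2 * s"
proof -
  have "neighbours (circulant p s) v
      \<subseteq> (\<lambda>k. (v + k) mod p) ` {1..s} \<union> (\<lambda>k. (v + p - k) mod p) ` {1..s}" (is "_ \<subseteq> ?N")
  proof
    fix w assume "w \<in> neighbours (circulant p s) v"
    then obtain a k where ak: "{v, w} = {a, (a + k) mod p}" "a < p" "k \<in> {1..s}"
      by (auto simp: circulant_def)
    then consider "v = a" "w = (a + k) mod p" | "w = a" "v = (a + k) mod p"
      by (auto simp: doubleton_eq_iff)
    then show "w \<in> ?N"
    proof cases
      case 1
      then show ?thesis using ak(3) by auto
    next
      case 2
      then have "w = (v + p - k) mod p"
        using ak assms by (cases "a + k < p") (auto simp: add_mod_eq_if)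
      then show ?thesis using ak(3) by auto
    qed
  qed
  then have "degree (circulant p s) v \<le> card ?N" by (rule card_mono[rotated]) auto
  also have "\<dots> \<le> card ((\<lambda>k. (v + k) mod p) ` {1..s}) + card ((\<lambda>k. (v + p - k) mod p) ` {1..s})"
    by (rule card_Un_le)
  also have "\<dots> \<le> s + s" using card_image_le[of "{1..s}"] by (intro add_mono) auto
  finally show ?thesis by simp
qed


lemma simple_graph_antipodal_matching: "simple_graph {0..<p} (antipodal_matching p)"
  unfolding simple_graph_def antipodal_matching_def by auto

lemma card_antipodal_matching: "card (antipodal_matching p) = p div 2"
proof -
  have "inj_on (\<lambda>i. {i, i + p div 2}) {0..<p div 2}"
    by (rule inj_onI) (auto simp: doubleton_eq_iff)
  then show ?thesis unfolding antipodal_matching_def by (simp add: card_image)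
qed

lemma degree_antipodal_matching_le: "degree (antipodal_matching p) v \<le> 1"
proof -
  have "neighbours (antipodal_matching p) v \<subseteq> {if v < p div 2 then v + p div 2 else v - p div 2}"
    unfolding antipodal_matching_def by (auto simp: doubleton_eq_iff)
  then have "degree (antipodal_matching p) v \<le> card {if v < p div 2 then v + p div 2 else v - p div 2}"
    by (rule card_mono[rotated]) simp
  then show ?thesis by simp
qed

lemma circulant_Int_antipodal_matching:
  assumes "2 * s + 1 < p" shows "circulant p s \<inter> antipodal_matching p = {}"
proof (rule equals0I)
  fix e assume "e \<in> circulant p s \<inter> antipodal_matching p"
  then obtain a k i where e: "{a, (a + k) mod p} = {i, i + p div 2}"
    and aki: "a < p" "1 \<le> k" "k \<le> s" "i < p div 2"
    unfolding circulant_def antipodal_matching_def by auto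
  have h: "s < p div 2" "p div 2 + p div 2 \<le> p" using assms by auto
  have mod: "(a + k) mod p = (if a + k < p then a + k else a + k - p)"
    using aki h by (intro add_mod_eq_if) auto
  from e consider "a = i" "(a + k) mod p = i + p div 2" | "a = i + p div 2" "(a + k) mod p = i"
    by (auto simp: doubleton_eq_iff)
  then show False
    using mod aki h by cases (auto split: if_splits)
qed

lemma obtain_graph_with_degree_le:
  assumes "d < p"
  obtains E where "simple_graph {0..<p} E" "card E = d * p div 2" "\<And>v. degree E v \<le> d"
proof -
  define s where "s = d div 2"
  show ?thesis
  proof (cases "even d")
    case True
    then have d: "d = 2 * s" by (simp add: s_def)
    show ?thesis
    proof (rule that)
      show "simple_graph {0..<p} (circulant p s)" using assms d by (intro simple_graph_circulant) simp
      show "card (circulant p s) = d * p div 2" using assms d by (simp add: card_circulant)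
      show "degree (circulant p s) v \<le> d" for v using assms d by (simp add: degree_circulant_le)
    qed
  next
    case False
    then have d: "d = 2 * s + 1" by (simp add: s_def)
    define E where "E = circulant p s \<union> antipodal_matching p"
    show ?thesis
    proof (rule that)
      show "simple_graph {0..<p} E"
        using simple_graph_circulant[of s p] simple_graph_antipodal_matching[of p] assms d
        unfolding E_def simple_graph_def by auto
      have "finite (circulant p s)" "finite (antipodal_matching p)"
        by (simp_all add: circulant_def antipodal_matching_def)
      then have "card E = p * s + p div 2"
        unfolding E_def using circulant_Int_antipodal_matching[of s p] assms d
        by (simp add: card_Un_disjoint card_circulant card_antipodal_matching)
      moreover have "d * p = p + 2 * (p * s)" using d by (simp add: algebra_simps)
      ultimately show "card E = d * p div 2" by (simp add: mult.commute)
      show "degree E v \<le> d" for v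
      proof -
        have "degree E v \<le> degree (circulant p s) v + degree (antipodal_matching p) v"
          unfolding E_def neighbours_Un by (rule card_Un_le)
        then show ?thesis
          using degree_circulant_le[of s p v] degree_antipodal_matching_le[of p v] assms d by simp
      qed
    qed
  qed
qed

lemma T3_free_twice_card_edges_le:
  assumes graph: "simple_graph V E" and card_V: "card V = n - 1 + r"
    and n: "15 \<le> n" and r: "3 \<le> r" "r + 9 \<le> n"
    and T3_free: "\<not> contains_subgraph V E (T3_vertices n) (T3_edges n)"
  shows "2 * card E \<le> (n - 5) * (n - 1 + r) \<or> 2 * card E \<le> (n - 1) * (n - 2) + r * (r - 1)"
proof -
  interpret finite_simple_graph V E by unfold_locales (rule graph)
  define heavy where "heavy v \<longleftrightarrow> v \<in> V \<and> n - 4 \<le> degree E v \<and> (\<exists>w\<in>neighbours E v. 4 \<le> degree E w)"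
    for v
  show ?thesis
  proof (cases "\<exists>v. heavy v")
    case True
    have "degree E v < card V + 1" for v
      using neighbours_subset finite_vertices by (simp add: card_mono less_Suc_eq_le)
    then obtain u where "heavy u" "\<And>v. heavy v \<Longrightarrow> degree E v \<le> degree E u"
      using True ex_has_greatest_nat[of heavy _ "\<lambda>v. degree E v" "card V + 1"] by metis
    then interpret T3_free_heavy_vertex V E n r u
      using card_V n r T3_free by unfold_locales (auto simp: heavy_def simp del: in_neighbours_iff)
    show ?thesis by (rule twice_card_edges_le_max)
  next
    case False
    have "degree E w \<le> 3" if "u \<in> V" "n - 4 \<le> degree E u" "w \<in> neighbours E u" for u w
    proof -
      have "\<not> heavy u" using False by blast
      then have "\<not> 4 \<le> degree E w" using that unfolding heavy_def by blast
      then show ?thesis by linarith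
    qed
    then have "2 * card E \<le> (n - 5) * card V"
      using n by (intro twice_card_edges_le_if_no_heavy_edge) auto
    then show ?thesis using card_V by simp
  qed
qed

lemma T3_free_card_edges_le:
  assumes "simple_graph V E" "card V = n - 1 + r" "15 \<le> n" "3 \<le> r" "r + 9 \<le> n"
    and "\<not> contains_subgraph V E (T3_vertices n) (T3_edges n)"
  shows "card E \<le> max ((n - 5) * (n - 1 + r) div 2) ((n - 1 choose 2) + (r choose 2))"
proof -
  have choose2: "2 * (k choose 2) = k * (k - 1)" for k :: nat
    by (cases k) (simp_all add: choose_two)
  have "n - 1 - 1 = n - 2" by simp
  then have "(n - 1) * (n - 2) + r * (r - 1) = 2 * ((n - 1 choose 2) + (r choose 2))"
    using choose2[of "n - 1"] choose2[of r] by (metis add_mult_distrib2)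
  then have "2 * card E \<le> (n - 5) * (n - 1 + r) \<or> 2 * card E \<le> 2 * ((n - 1 choose 2) + (r choose 2))"
    using T3_free_twice_card_edges_le[OF assms] by simp
  then show ?thesis
  proof
    assume "2 * card E \<le> (n - 5) * (n - 1 + r)"
    then have "card E \<le> (n - 5) * (n - 1 + r) div 2" by linarith
    then show ?thesis by (simp add: le_max_iff_disj)
  next
    assume "2 * card E \<le> 2 * ((n - 1 choose 2) + (r choose 2))"
    then show ?thesis by (simp add: le_max_iff_disj)
  qed
qed

lemma ex_eqI:
  assumes upper: "\<And>E. \<lbrakk>simple_graph {0..<p} E; \<not> contains_subgraph {0..<p} E VL EL\<rbrakk> \<Longrightarrow> card E \<le> M"
    and witness: "simple_graph {0..<p} E\<^sub>0" "\<not> contains_subgraph {0..<p} E\<^sub>0 VL EL" "card E\<^sub>0 = M"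
  shows "ex p VL EL = M"
proof -
  let ?S = "{card E |E. simple_graph {0..<p} E \<and> \<not> contains_subgraph {0..<p} E VL EL}"
  have "?S \<subseteq> {..card (Pow {0..<p})}"
  proof
    fix k assume "k \<in> ?S"
    then obtain E where E: "k = card E" "simple_graph {0..<p} E" by blast
    then have "E \<subseteq> Pow {0..<p}" unfolding simple_graph_def by blast
    then show "k \<in> {..card (Pow {0..<p})}" using E(1) by (simp add: card_mono)
  qed
  then have "finite ?S" by (rule finite_subset) simp
  moreover have "k \<le> M" if "k \<in> ?S" for k using that upper by blast
  moreover have "M \<in> ?S" using witness by blast
  ultimately show ?thesis unfolding ex_def by (rule Max_eqI)
qed

lemma obtain_extremal_T3_free_graph:
  assumes n: "n \<ge> 6" and p: "p = n - 1 + r" and r: "r + 4 \<le> n"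
  obtains E where "simple_graph {0..<p} E" "\<not> contains_subgraph {0..<p} E (T3_vertices n) (T3_edges n)"
    "card E = max ((n - 5) * p div 2) ((n - 1 choose 2) + (r choose 2))"
proof (cases "(n - 5) * p div 2 \<le> (n - 1 choose 2) + (r choose 2)")
  case True
  have "n - 1 < n" "n - 1 \<le> p" "p - (n - 1) + 4 \<le> n" "p - (n - 1) = r" using n p r by auto
  then show ?thesis
    using that[of "two_cliques (n - 1) p"] True
      simple_graph_two_cliques[of "n - 1" p] card_two_cliques[of "n - 1" p]
      two_cliques_not_contains_T3[OF n, of "n - 1" p]
    by (simp add: max_def)
next
  case False
  have "n - 5 < p" using n p by simp
  then obtain E where E: "simple_graph {0..<p} E" "card E = (n - 5) * p div 2" "\<And>v. degree E v \<le> n - 5"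
    using obtain_graph_with_degree_le by blast
  moreover have "\<not> contains_subgraph {0..<p} E (T3_vertices n) (T3_edges n)"
    using finite_simple_graph.not_contains_T3_if_degree_le[OF finite_simple_graph.intro[OF E(1)] n] E(3)
    by simp
  ultimately show ?thesis using that False by (simp add: max_def)
qed

theorem lemma4p3:
  fixes n r :: nat
  assumes "n \<ge> 15" and "3 \<le> r" and "r \<le> n - 9"
  shows "ex (n - 1 + r) (T3_vertices n) (T3_edges n)
           = max (((n - 5) * (n - 1 + r)) div 2) (((n - 1) choose 2) + (r choose 2))"
proof -
  have "n \<ge> 6" "r + 4 \<le> n" using assms by linarith+
  then obtain E\<^sub>0 where extremal: "simple_graph {0..<n - 1 + r} E\<^sub>0"
      "\<not> contains_subgraph {0..<n - 1 + r} E\<^sub>0 (T3_vertices n) (T3_edges n)"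
      "card E\<^sub>0 = max ((n - 5) * (n - 1 + r) div 2) ((n - 1 choose 2) + (r choose 2))"
    using obtain_extremal_T3_free_graph[of n "n - 1 + r" r] by blast
  show ?thesis
  proof (rule ex_eqI[OF _ extremal])
    fix E assume graph: "simple_graph {0..<n - 1 + r} E"
      and T3_free: "\<not> contains_subgraph {0..<n - 1 + r} E (T3_vertices n) (T3_edges n)"
    show "card E \<le> max ((n - 5) * (n - 1 + r) div 2) ((n - 1 choose 2) + (r choose 2))"
      using T3_free_card_edges_le[OF graph _ _ _ _ T3_free] assms by simp
  qed
qed

end
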